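(* Let $0<\epsilon<1$ and let $\bar b,\bar w$ satisfy $b/2\le\bar b\le 2b$ and $w/6\le\bar w\le 6w$. Let $(P_H,P_L)$ be any appropriate partition of $E$ with respect to $\bar b,\bar w,\epsilon$. Let $c>0$ and $s\ge c\cdot m\log(n/\epsilon^2)/(\bar b^{1/4}\epsilon^{9/4})$, let $e_1,\dots,e_s$ be edges drawn independently and uniformly at random from $E$, $S=\{e_1,\dots,e_s\}$, and $Y=\frac1s\sum_{i=1}^s\mathrm{wt}_{P_L}(e_i)$. Then $$b(1-c_H\epsilon)\le m\,\mathbb{E}[Y]\le b.$$ Moreover, if the constant $c$ is large enough (namely $c>1/(2(1-c_H\epsilon))$), then $$\Pr\left[mY<b(1-2c_H\epsilon)\right]<\frac{\epsilon^2}{n}.$$ Here $c_H=1.77\times10^4$.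
   Context: Let $G=(V,E)$ be a bipartite graph with bipartition $V=U\cup L$, $n=|V|$, $m=|E|$; $d_v$ is the degree of $v$; for $e=(u,v)$, $d_e=d_u+d_v-2$; $w$ is the number of wedges (paths with two edges). A butterfly is a set of four distinct vertices $\{u_1,u_2,v_1,v_2\}$, $u_i\in U$, $v_i\in L$, with all four pairs $u_iv_j$ edges; $b$ is the number of butterflies and $b(e)$ the number containing edge $e$. For nonempty $P_L\subseteq E$ and a butterfly $B$: $\mathrm{wt}_{P_L}(B)=0$ if none of its edges is in $P_L$, and $1/\ell$ if exactly $\ell>0$ of its edges are in $P_L$; for an edge $e$, $\mathrm{wt}_{P_L}(e)=0$ if $e\notin P_L$ and $\mathrm{wt}_{P_L}(e)=\sum_{B\ni e}\mathrm{wt}_{P_L}(B)$ otherwise. Given $\bar b,\bar w,\epsilon$, an edge $e$ is heavy if $b(e)>2\bar b^{3/4}/\epsilon^{1/4}$ or $d_e>\bar w/(\epsilon\bar b)^{1/4}$, and light if $b(e)<\bar b^{3/4}/(2\epsilon^{1/4})$ and $d_e<\bar w/(\epsilon\bar b)^{1/4}$. A partition $(P_H,P_L)$ of $E$ is appropriate if every heavy edge is in $P_H$ and every light edge in $P_L$. *)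

theory Defs
  imports "HOL-Probability.Probability"
begin

(* A bipartite graph is given by disjoint finite vertex classes U, L and an
   edge set E \<subseteq> U \<times> L; the edge {u,v} (u \<in> U, v \<in> L) is the pair (u,v). *)

definition degree :: "('a \<times> 'a) set \<Rightarrow> 'a \<Rightarrow> nat" where
  "degree E x = card {e \<in> E. fst e = x \<or> snd e = x}"

definition edge_degree :: "('a \<times> 'a) set \<Rightarrow> 'a \<times> 'a \<Rightarrow> real" where
  "edge_degree E e = real (degree E (fst e)) + real (degree E (snd e)) - 2"

definition wedges :: "('a \<times> 'a) set \<Rightarrow> ('a \<times> 'a) set set" where
  "wedges E = {{e1, e2} | e1 e2. e1 \<in> E \<and> e2 \<in> E \<and> e1 \<noteq> e2 \<and>
                 (fst e1 = fst e2 \<or> snd e1 = snd e2)}"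

definition num_wedges :: "('a \<times> 'a) set \<Rightarrow> nat" where
  "num_wedges E = card (wedges E)"

definition butterflies :: "'a set \<Rightarrow> 'a set \<Rightarrow> ('a \<times> 'a) set \<Rightarrow> 'a set set" where
  "butterflies U L E = {{u1, u2, v1, v2} | u1 u2 v1 v2.
      u1 \<in> U \<and> u2 \<in> U \<and> v1 \<in> L \<and> v2 \<in> L \<and> u1 \<noteq> u2 \<and> v1 \<noteq> v2 \<and>
      (u1, v1) \<in> E \<and> (u1, v2) \<in> E \<and> (u2, v1) \<in> E \<and> (u2, v2) \<in> E}"

definition num_butterflies :: "'a set \<Rightarrow> 'a set \<Rightarrow> ('a \<times> 'a) set \<Rightarrow> nat" where
  "num_butterflies U L E = card (butterflies U L E)"

definition bf_edges :: "('a \<times> 'a) set \<Rightarrow> 'a set \<Rightarrow> ('a \<times> 'a) set" where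
  "bf_edges E B = {e \<in> E. fst e \<in> B \<and> snd e \<in> B}"

definition edge_butterflies :: "'a set \<Rightarrow> 'a set \<Rightarrow> ('a \<times> 'a) set \<Rightarrow> 'a \<times> 'a \<Rightarrow> nat" where
  "edge_butterflies U L E e = card {B \<in> butterflies U L E. e \<in> bf_edges E B}"

definition wt_bf :: "('a \<times> 'a) set \<Rightarrow> ('a \<times> 'a) set \<Rightarrow> 'a set \<Rightarrow> real" where
  "wt_bf E PL B = (let l = card (bf_edges E B \<inter> PL) in if l = 0 then 0 else 1 / real l)"

definition wt_edge :: "'a set \<Rightarrow> 'a set \<Rightarrow> ('a \<times> 'a) set \<Rightarrow> ('a \<times> 'a) set \<Rightarrow> 'a \<times> 'a \<Rightarrow> real" where
  "wt_edge U L E PL e = (if e \<notin> PL then 0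
      else (\<Sum>B \<in> {B \<in> butterflies U L E. e \<in> bf_edges E B}. wt_bf E PL B))"

definition heavy :: "'a set \<Rightarrow> 'a set \<Rightarrow> ('a \<times> 'a) set \<Rightarrow> real \<Rightarrow> real \<Rightarrow> real \<Rightarrow> 'a \<times> 'a \<Rightarrow> bool" where
  "heavy U L E bb ww eps e \<longleftrightarrow>
     real (edge_butterflies U L E e) > 2 * bb powr (3/4) / eps powr (1/4) \<or>
     edge_degree E e > ww / (eps * bb) powr (1/4)"

definition light :: "'a set \<Rightarrow> 'a set \<Rightarrow> ('a \<times> 'a) set \<Rightarrow> real \<Rightarrow> real \<Rightarrow> real \<Rightarrow> 'a \<times> 'a \<Rightarrow> bool" where
  "light U L E bb ww eps e \<longleftrightarrow>
     real (edge_butterflies U L E e) < bb powr (3/4) / (2 * eps powr (1/4)) \<and>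
     edge_degree E e < ww / (eps * bb) powr (1/4)"

definition appropriate :: "'a set \<Rightarrow> 'a set \<Rightarrow> ('a \<times> 'a) set \<Rightarrow> real \<Rightarrow> real \<Rightarrow> real
     \<Rightarrow> ('a \<times> 'a) set \<Rightarrow> ('a \<times> 'a) set \<Rightarrow> bool" where
  "appropriate U L E bb ww eps PH PL \<longleftrightarrow>
     PH \<union> PL = E \<and> PH \<inter> PL = {} \<and>
     (\<forall>e \<in> E. heavy U L E bb ww eps e \<longrightarrow> e \<in> PH) \<and>
     (\<forall>e \<in> E. light U L E bb ww eps e \<longrightarrow> e \<in> PL)"

definition c_H :: real where "c_H = 17700"

(* distribution of (e_1,...,e_s): independent uniform samples from E, indexed by {..<s} *)
definition edge_samples :: "('a \<times> 'a) set \<Rightarrow> nat \<Rightarrow> (nat \<Rightarrow> 'a \<times> 'a) pmf" where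
  "edge_samples E s = Pi_pmf {..<s} undefined (\<lambda>_. pmf_of_set E)"

end

theory Submission
  imports Defs
begin

(*
  A butterfly with l > 0 edges in P_L gives weight 1/l to each of them, so the weights of
  all edges add up to the number of butterflies meeting P_L, and m E[Y] is exactly this
  number; in particular m E[Y] <= b.  A butterfly missing P_L has all its edges in P_H,
  which consists of non-light edges.  Double counting gives sum_e b(e) = 4 b and
  sum_e d_e = 2 w, so by Markov's inequality |P_H| <= (8 b / bb + 12) (eps bb)^(1/4); as a
  butterfly is determined by a pair of opposite edges, at most |P_H|^2 / 2 <= c_H eps b
  butterflies miss P_L.  For the tail bound, the edges of P_L are not heavy, so every
  sampled weight lies in [0, 2 bb^(3/4) / eps^(1/4)], and the multiplicative Chernoff
  bound for the lower tail, with deviation at least c_H eps b / m, has an exponent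
  larger than ln (n / eps^2).
*)

section \<open>A Chernoff bound for independent samples\<close>

lemma exp_minus_le_quadratic:
  fixes x :: real
  assumes "0 \<le> x"
  shows "exp (- x) \<le> 1 - x + x\<^sup>2 / 2"
proof -
  let ?g = "\<lambda>t::real. 1 - t + t\<^sup>2 / 2 - exp (- t)"
  have "?g 0 \<le> ?g x"
  proof (rule DERIV_nonneg_imp_nondecreasing[OF assms])
    fix t :: real
    have "0 \<le> -1 + t + exp (- t)"
      using exp_ge_add_one_self[of "- t"] by linarith
    moreover have "(?g has_real_derivative (-1 + t + exp (- t))) (at t)"
      by (auto intro!: derivative_eq_intros)
    ultimately show "\<exists>y. (?g has_real_derivative y) (at t) \<and> 0 \<le> y"
      by blast
  qed
  then show ?thesis by simp
qed

lemma integrable_pmf_bounded: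
  fixes X :: "'a \<Rightarrow> real"
  assumes "\<And>x. x \<in> set_pmf p \<Longrightarrow> \<bar>X x\<bar> \<le> B"
  shows "integrable (measure_pmf p) X"
  by (rule measure_pmf.integrable_const_bound[where B = B]) (auto intro: AE_pmfI assms)

lemma expectation_sum_Pi_pmf:
  fixes X :: "'b \<Rightarrow> real"
  assumes "finite I" and "integrable (measure_pmf p) X"
  shows "measure_pmf.expectation (Pi_pmf I d (\<lambda>_. p)) (\<lambda>f. \<Sum>i\<in>I. X (f i))
           = real (card I) * measure_pmf.expectation p X"
proof -
  have component: "map_pmf (\<lambda>f. f i) (Pi_pmf I d (\<lambda>_. p)) = p" if "i \<in> I" for i
    using assms(1) that by (simp add: Pi_pmf_component)
  have "integrable (measure_pmf (Pi_pmf I d (\<lambda>_. p))) (\<lambda>f. X (f i))" if "i \<in> I" for i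
    using assms(2) component[OF that] integrable_map_pmf_eq[of "\<lambda>f. f i" "Pi_pmf I d (\<lambda>_. p)" X]
    by simp
  then have "measure_pmf.expectation (Pi_pmf I d (\<lambda>_. p)) (\<lambda>f. \<Sum>i\<in>I. X (f i))
          = (\<Sum>i\<in>I. measure_pmf.expectation (map_pmf (\<lambda>f. f i) (Pi_pmf I d (\<lambda>_. p))) X)"
    by (subst Bochner_Integration.integral_sum) auto
  also have "\<dots> = real (card I) * measure_pmf.expectation p X"
    by (simp add: component)
  finally show ?thesis .
qed

lemma expectation_exp_minus_le:
  fixes X :: "'b \<Rightarrow> real"
  assumes X: "\<And>x. x \<in> set_pmf p \<Longrightarrow> 0 \<le> X x \<and> X x \<le> M" and "0 < l"
  defines "\<mu> \<equiv> measure_pmf.expectation p X"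
  shows "measure_pmf.expectation p (\<lambda>x. exp (- l * X x)) \<le> exp (- l * \<mu> + l\<^sup>2 * M * \<mu> / 2)"
proof -
  have int_X: "integrable (measure_pmf p) X"
    by (rule integrable_pmf_bounded[where B = M]) (use X in force)
  have "measure_pmf.expectation p (\<lambda>x. exp (- l * X x))
          \<le> measure_pmf.expectation p (\<lambda>x. 1 - l * X x + l\<^sup>2 * M * X x / 2)"
  proof (rule integral_mono_AE[OF _ _ AE_pmfI])
    show "integrable (measure_pmf p) (\<lambda>x. exp (- l * X x))"
      by (rule integrable_pmf_bounded[where B = 1]) (use X \<open>0 < l\<close> in simp)
    show "integrable (measure_pmf p) (\<lambda>x. 1 - l * X x + l\<^sup>2 * M * X x / 2)"
      using int_X by simp
    fix x assume "x \<in> set_pmf p"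
    then have "0 \<le> X x" "X x \<le> M" using X by auto
    then have "(l * X x)\<^sup>2 \<le> l\<^sup>2 * M * X x"
      using mult_left_mono[of "X x" M "l\<^sup>2 * X x"] \<open>0 < l\<close> by (simp add: power2_eq_square mult_ac)
    then show "exp (- l * X x) \<le> 1 - l * X x + l\<^sup>2 * M * X x / 2"
      using exp_minus_le_quadratic[of "l * X x"] \<open>0 \<le> X x\<close> \<open>0 < l\<close> by simp
  qed
  also have "\<dots> = 1 - l * \<mu> + l\<^sup>2 * M * \<mu> / 2"
    using int_X unfolding \<mu>_def by simp
  also have "\<dots> \<le> exp (- l * \<mu> + l\<^sup>2 * M * \<mu> / 2)"
    using exp_ge_add_one_self[of "- l * \<mu> + l\<^sup>2 * M * \<mu> / 2"] by linarith
  finally show ?thesis .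
qed

lemma prob_Pi_pmf_sum_le_chernoff:
  fixes X :: "'b \<Rightarrow> real"
  assumes "finite I"
    and X: "\<And>x. x \<in> set_pmf p \<Longrightarrow> 0 \<le> X x \<and> X x \<le> M" and "M > 0"
    and \<mu>: "\<mu> = measure_pmf.expectation p X" "\<mu> > 0" and "\<Delta> > 0"
  shows "measure_pmf.prob (Pi_pmf I d (\<lambda>_. p))
           {f. (\<Sum>i\<in>I. X (f i)) \<le> real (card I) * (\<mu> - \<Delta>)}
         \<le> exp (- real (card I) * \<Delta>\<^sup>2 / (2 * M * \<mu>))"
proof -
  define P where "P = Pi_pmf I d (\<lambda>_. p)"
  define S where "S = (\<lambda>f. \<Sum>i\<in>I. X (f i))"
  define k where "k = real (card I)"
  \<comment> \<open>This choice of l minimises the resulting exponent.\<close>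
  define l where "l = \<Delta> / (M * \<mu>)"
  have "l > 0" using assms by (simp add: l_def)
  have int_exp: "integrable (measure_pmf p) (\<lambda>x. exp (- l * X x))"
    by (rule integrable_pmf_bounded[where B = 1]) (use X \<open>l > 0\<close> in simp)
  have exp_S: "(\<lambda>f. exp (- l * S f)) = (\<lambda>f. \<Prod>i\<in>I. exp (- l * X (f i)))"
    using \<open>finite I\<close> by (simp add: S_def sum_distrib_left exp_sum flip: sum_negf)
  have int_exp_S: "integrable (measure_pmf P) (\<lambda>f. exp (- l * S f))"
    unfolding exp_S P_def using \<open>finite I\<close> int_exp by (intro integrable_prod_Pi_pmf) auto
  have "measure_pmf.prob P {f. S f \<le> k * (\<mu> - \<Delta>)}
        \<le> measure_pmf.prob P {f \<in> space (measure_pmf P). exp (- l * (k * (\<mu> - \<Delta>))) \<le> exp (- l * S f)}"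
    using \<open>l > 0\<close> by (intro measure_pmf.finite_measure_mono) auto
  also have "\<dots> \<le> measure_pmf.expectation P (\<lambda>f. exp (- l * S f)) / exp (- l * (k * (\<mu> - \<Delta>)))"
    by (rule integral_Markov_inequality_measure[OF int_exp_S]) auto
  also have "measure_pmf.expectation P (\<lambda>f. exp (- l * S f))
               = measure_pmf.expectation p (\<lambda>x. exp (- l * X x)) ^ card I"
    unfolding exp_S P_def using \<open>finite I\<close> int_exp
    by (subst expectation_prod_Pi_pmf) auto
  also have "\<dots> / exp (- l * (k * (\<mu> - \<Delta>)))
             \<le> exp (- l * \<mu> + l\<^sup>2 * M * \<mu> / 2) ^ card I / exp (- l * (k * (\<mu> - \<Delta>)))"
    using expectation_exp_minus_le[OF X \<open>l > 0\<close>] \<mu>(1)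
    by (intro divide_right_mono power_mono) auto
  also have "\<dots> = exp (k * (- l * \<mu> + l\<^sup>2 * M * \<mu> / 2) - (- l * (k * (\<mu> - \<Delta>))))"
    by (simp only: k_def exp_of_nat_mult[symmetric] exp_diff[symmetric])
  also have "k * (- l * \<mu> + l\<^sup>2 * M * \<mu> / 2) - (- l * (k * (\<mu> - \<Delta>))) = - k * \<Delta>\<^sup>2 / (2 * M * \<mu>)"
    using assms unfolding l_def by (simp add: field_simps power2_eq_square)
  finally show ?thesis by (simp add: S_def P_def k_def)
qed

lemma card_Markov_inequality:
  fixes f :: "'a \<Rightarrow> real"
  assumes "finite A" "\<And>x. x \<in> A \<Longrightarrow> 0 \<le> f x" "t > 0"
  shows "real (card {x \<in> A. t \<le> f x}) \<le> (\<Sum>x\<in>A. f x) / t"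
proof -
  have "real (card {x \<in> A. t \<le> f x}) * t = (\<Sum>x \<in> {x \<in> A. t \<le> f x}. t)"
    by simp
  also have "\<dots> \<le> (\<Sum>x \<in> {x \<in> A. t \<le> f x}. f x)"
    by (rule sum_mono) simp
  also have "\<dots> \<le> (\<Sum>x\<in>A. f x)"
    using assms by (intro sum_mono2) auto
  finally show ?thesis
    using \<open>t > 0\<close> by (simp add: field_simps)
qed

lemma real_choose_two_le: "real (n choose 2) \<le> real n ^ 2 / 2"
proof -
  have "real (n choose 2) = real n * (real n - 1) / 2"
    by (cases n) (auto simp: choose_two real_of_nat_div algebra_simps)
  then show ?thesis by (simp add: power2_eq_square field_simps)
qed

lemma powr_quarter_pow_4: "0 < x \<Longrightarrow> (x powr (1/4)) ^ 4 = (x :: real)"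
  by (simp add: powr_power)

lemma powr_three_quarters_div:
  fixes x y :: real
  assumes "0 < x" "0 < y"
  shows "y powr (3/4) / x powr (1/4) = y / (x * y) powr (1/4)"
proof -
  have "y powr (3/4) * y powr (1/4) = y"
    using assms by (simp flip: powr_add)
  then show ?thesis
    using assms by (simp add: powr_mult field_simps)
qed

lemma powr_quarter_mult_powr_nine_quarters:
  fixes x y :: real
  assumes "0 < x" "0 < y"
  shows "y powr (1/4) * x powr (9/4) = (x * y) powr (1/4) * x\<^sup>2"
proof -
  have "x powr (9/4) = x powr (1/4) * x powr 2"
    by (simp flip: powr_add)
  then show ?thesis
    using assms by (simp add: powr_mult powr_realpow)
qed

lemma half_square_le_c_H_mult:
  fixes h q r :: real
  assumes h: "4 \<le> h" "h \<le> (8 * r + 12) * q" and r: "1/2 \<le> r" "r \<le> 2"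
  shows "h\<^sup>2 / 2 \<le> c_H * r * q ^ 4"
proof -
  define K where "K = 8 * r + 12"
  have "0 < K" using r by (simp add: K_def)
  have K4: "K ^ 4 \<le> C ^ 3 * K" if "K \<le> C" for C
  proof -
    have "K ^ 3 * K \<le> C ^ 3 * K"
      using power_mono[OF that, of 3] \<open>0 < K\<close> by (intro mult_right_mono) auto
    then show ?thesis by (simp add: eval_nat_numeral)
  qed
  \<comment> \<open>566400 = 32 c_H, and h^2 / 2 \<le> h^4 / 32 because h \<ge> 4.\<close>
  have "K ^ 4 \<le> 566400 * r"
  proof (cases "r \<le> 1")
    case True
    then show ?thesis using K4[of 20] r by (simp add: K_def)
  next
    case False
    then show ?thesis using K4[of 28] r by (simp add: K_def)
  qed
  have "0 < K * q" using h unfolding K_def by linarith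
  then have "0 < q" using \<open>0 < K\<close> zero_less_mult_pos by blast
  have "16 * h\<^sup>2 \<le> h\<^sup>2 * h\<^sup>2"
    using h(1) power_mono[OF h(1), of 2] by (intro mult_right_mono) auto
  also have "h\<^sup>2 * h\<^sup>2 = h ^ 4" by (simp add: power2_eq_square power4_eq_xxxx)
  also have "\<dots> \<le> (K * q) ^ 4"
    using h by (intro power_mono) (auto simp: K_def)
  also have "\<dots> = K ^ 4 * q ^ 4" by (simp add: power_mult_distrib)
  also have "\<dots> \<le> 566400 * r * q ^ 4"
    using \<open>K ^ 4 \<le> 566400 * r\<close> \<open>0 < q\<close> by (intro mult_right_mono) auto
  finally show ?thesis by (simp add: c_H_def)
qed

section \<open>Butterflies, wedges and edge weights\<close>

lemma finite_wedges: "finite E \<Longrightarrow> finite (wedges E)"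
  by (rule finite_subset[of _ "Pow E"]) (auto simp: wedges_def)

lemma wt_edge_nonneg: "0 \<le> wt_edge U L E PL e"
  by (auto simp: wt_edge_def wt_bf_def Let_def intro!: sum_nonneg)

lemma wt_edge_le_edge_butterflies: "wt_edge U L E PL e \<le> real (edge_butterflies U L E e)"
proof -
  have "(\<Sum>B \<in> {B \<in> butterflies U L E. e \<in> bf_edges E B}. wt_bf E PL B)
          \<le> (\<Sum>B \<in> {B \<in> butterflies U L E. e \<in> bf_edges E B}. 1)"
    by (rule sum_mono) (simp add: wt_bf_def Let_def)
  then show ?thesis
    by (simp add: wt_edge_def edge_butterflies_def)
qed

lemma prob_sample_mean_wt_edge_less_nonpos:
  assumes "a \<le> 0"
  shows "measure_pmf.prob P
           {f. real (card E) * ((1 / real s) * (\<Sum>i<s. wt_edge U L E PL (f i))) < a} = 0"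
proof -
  have "0 \<le> real (card E) * ((1 / real s) * (\<Sum>i<s. wt_edge U L E PL (f i)))" for f
    by (simp add: wt_edge_nonneg sum_nonneg)
  then have "{f. real (card E) * ((1 / real s) * (\<Sum>i<s. wt_edge U L E PL (f i))) < a} = {}"
    using assms by (auto simp: not_less intro: order_trans)
  then show ?thesis by simp
qed

lemma appropriate_edge_butterflies_le:
  assumes "appropriate U L E bb ww eps PH PL" "e \<in> PL" "0 < eps" "0 < bb"
  shows "real (edge_butterflies U L E e) \<le> 2 * bb / (eps * bb) powr (1/4)"
proof -
  have "\<not> heavy U L E bb ww eps e"
    using assms(1,2) by (auto simp: appropriate_def)
  then show ?thesis
    using powr_three_quarters_div[OF assms(3,4)] by (simp add: heavy_def not_less)
qed

locale bipartite_graph =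
  fixes U L :: "'a set" and E :: "('a \<times> 'a) set"
  assumes finite_U: "finite U" and finite_L: "finite L"
    and disjoint: "U \<inter> L = {}" and edges: "E \<subseteq> U \<times> L"
begin

lemma finite_E: "finite E"
  using finite_subset[OF edges] finite_U finite_L by blast

lemma finite_butterflies: "finite (butterflies U L E)"
  by (rule finite_subset[of _ "Pow (U \<union> L)"]) (auto simp: butterflies_def finite_U finite_L)

lemma butterfliesE:
  assumes "B \<in> butterflies U L E"
  obtains u1 u2 v1 v2 where "B = {u1, u2, v1, v2}" "u1 \<noteq> u2" "v1 \<noteq> v2"
    "(u1, v1) \<in> E" "(u1, v2) \<in> E" "(u2, v1) \<in> E" "(u2, v2) \<in> E"
    "bf_edges E B = {(u1, v1), (u1, v2), (u2, v1), (u2, v2)}"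
proof -
  from assms obtain u1 u2 v1 v2 where B: "B = {u1, u2, v1, v2}"
    and UL: "u1 \<in> U" "u2 \<in> U" "v1 \<in> L" "v2 \<in> L"
    and ne: "u1 \<noteq> u2" "v1 \<noteq> v2"
    and E: "(u1, v1) \<in> E" "(u1, v2) \<in> E" "(u2, v1) \<in> E" "(u2, v2) \<in> E"
    unfolding butterflies_def by blast
  have "e \<in> {(u1, v1), (u1, v2), (u2, v1), (u2, v2)}" if "e \<in> bf_edges E B" for e
  proof -
    have "fst e \<in> U" "snd e \<in> L" "fst e \<in> B" "snd e \<in> B"
      using that edges unfolding bf_edges_def by auto
    moreover have "fst e \<notin> L" "snd e \<notin> U"
      using \<open>fst e \<in> U\<close> \<open>snd e \<in> L\<close> disjoint by auto
    ultimately have "fst e \<in> {u1, u2}" "snd e \<in> {v1, v2}"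
      using UL unfolding B by auto
    then show ?thesis by (cases e) auto
  qed
  then have "bf_edges E B \<subseteq> {(u1, v1), (u1, v2), (u2, v1), (u2, v2)}" ..
  moreover have "{(u1, v1), (u1, v2), (u2, v1), (u2, v2)} \<subseteq> bf_edges E B"
    using E unfolding bf_edges_def B by simp
  ultimately have "bf_edges E B = {(u1, v1), (u1, v2), (u2, v1), (u2, v2)}"
    by (rule subset_antisym)
  with B ne E that show ?thesis by blast
qed

lemma card_bf_edges: "B \<in> butterflies U L E \<Longrightarrow> card (bf_edges E B) = 4"
  by (erule butterfliesE) auto

lemma sum_edge_butterflies:
  "(\<Sum>e\<in>E. edge_butterflies U L E e) = 4 * num_butterflies U L E"
  unfolding edge_butterflies_def num_butterflies_def
proof (rule sum_multicount[OF finite_E finite_butterflies], intro ballI)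
  fix B assume "B \<in> butterflies U L E"
  moreover have "{e \<in> E. e \<in> bf_edges E B} = bf_edges E B"
    by (auto simp: bf_edges_def)
  ultimately show "card {e \<in> E. e \<in> bf_edges E B} = 4"
    by (simp add: card_bf_edges)
qed

lemma degree_fst:
  assumes "e \<in> E"
  shows "degree E (fst e) = card {e' \<in> E. fst e' = fst e}"
proof -
  have "snd e' \<noteq> fst e" if "e' \<in> E" for e'
  proof -
    have "fst e \<in> U" "snd e' \<in> L" using assms that edges by auto
    then show ?thesis using disjoint by auto
  qed
  then have "{e' \<in> E. fst e' = fst e \<or> snd e' = fst e} = {e' \<in> E. fst e' = fst e}"
    by blast
  then show ?thesis unfolding degree_def by simp
qed

lemma degree_snd:
  assumes "e \<in> E"
  shows "degree E (snd e) = card {e' \<in> E. snd e' = snd e}"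
proof -
  have "fst e' \<noteq> snd e" if "e' \<in> E" for e'
  proof -
    have "fst e' \<in> U" "snd e \<in> L" using assms that edges by auto
    then show ?thesis using disjoint by auto
  qed
  then have "{e' \<in> E. fst e' = snd e \<or> snd e' = snd e} = {e' \<in> E. snd e' = snd e}"
    by blast
  then show ?thesis unfolding degree_def by simp
qed

lemma edge_degree_eq_card_adjacent:
  assumes "e \<in> E"
  shows "edge_degree E e = card {e' \<in> E. e' \<noteq> e \<and> (fst e' = fst e \<or> snd e' = snd e)}"
proof -
  define A where "A = {e' \<in> E. fst e' = fst e}"
  define B where "B = {e' \<in> E. snd e' = snd e}"
  have fin: "finite A" "finite B" using finite_E by (auto simp: A_def B_def)
  have "e \<in> A" "e \<in> B" using assms by (auto simp: A_def B_def)
  have "{e' \<in> E. e' \<noteq> e \<and> (fst e' = fst e \<or> snd e' = snd e)} = (A - {e}) \<union> (B - {e})"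
    by (auto simp: A_def B_def)
  moreover have "(A - {e}) \<inter> (B - {e}) = {}"
    by (auto simp: A_def B_def prod_eq_iff)
  ultimately have "card {e' \<in> E. e' \<noteq> e \<and> (fst e' = fst e \<or> snd e' = snd e)}
                     = (card A - 1) + (card B - 1)"
    using fin \<open>e \<in> A\<close> \<open>e \<in> B\<close> by (simp add: card_Un_disjoint)
  moreover have "1 \<le> card A" "1 \<le> card B"
    using fin \<open>e \<in> A\<close> \<open>e \<in> B\<close> by (auto simp: Suc_le_eq card_gt_0_iff)
  ultimately show ?thesis
    unfolding edge_degree_def degree_fst[OF assms] degree_snd[OF assms]
    by (simp add: A_def B_def)
qed

lemma edge_degree_eq_card_wedges:
  assumes "e \<in> E"
  shows "edge_degree E e = card {W \<in> wedges E. e \<in> W}"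
proof -
  define N where "N = {e' \<in> E. e' \<noteq> e \<and> (fst e' = fst e \<or> snd e' = snd e)}"
  have inj: "inj_on (\<lambda>e'. {e, e'}) N"
    by (rule inj_onI) (auto simp: N_def doubleton_eq_iff)
  have image: "(\<lambda>e'. {e, e'}) ` N = {W \<in> wedges E. e \<in> W}"
  proof
    show "(\<lambda>e'. {e, e'}) ` N \<subseteq> {W \<in> wedges E. e \<in> W}"
      using assms unfolding N_def wedges_def by blast
    show "{W \<in> wedges E. e \<in> W} \<subseteq> (\<lambda>e'. {e, e'}) ` N"
    proof
      fix W assume "W \<in> {W \<in> wedges E. e \<in> W}"
      then obtain e1 e2 where W: "W = {e1, e2}" "e \<in> W" "e1 \<in> E" "e2 \<in> E" "e1 \<noteq> e2"
        and adjacent: "fst e1 = fst e2 \<or> snd e1 = snd e2"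
        unfolding wedges_def by blast
      then consider "e = e1" | "e = e2" by blast
      then show "W \<in> (\<lambda>e'. {e, e'}) ` N"
      proof cases
        case 1
        then have "e2 \<in> N" using W adjacent by (auto simp: N_def)
        then show ?thesis using W 1 by blast
      next
        case 2
        then have "e1 \<in> N" using W adjacent by (auto simp: N_def)
        moreover have "W = {e, e1}" using W 2 by blast
        ultimately show ?thesis by blast
      qed
    qed
  qed
  have "card {W \<in> wedges E. e \<in> W} = card N"
    unfolding image[symmetric] by (rule card_image[OF inj])
  then show ?thesis
    unfolding edge_degree_eq_card_adjacent[OF assms] N_def by simp
qed

lemma sum_edge_degree: "(\<Sum>e\<in>E. edge_degree E e) = 2 * real (num_wedges E)"
proof -
  have "(\<Sum>e\<in>E. card {W \<in> wedges E. e \<in> W}) = 2 * num_wedges E"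
    unfolding num_wedges_def
  proof (rule sum_multicount[OF finite_E finite_wedges[OF finite_E]], intro ballI)
    fix W assume "W \<in> wedges E"
    then obtain e1 e2 where "W = {e1, e2}" "e1 \<in> E" "e2 \<in> E" "e1 \<noteq> e2"
      unfolding wedges_def by blast
    then have "{e \<in> E. e \<in> W} = {e1, e2}" by auto
    then show "card {e \<in> E. e \<in> W} = 2"
      using \<open>e1 \<noteq> e2\<close> by simp
  qed
  then show ?thesis
    by (simp add: edge_degree_eq_card_wedges flip: of_nat_sum)
qed

lemma sum_wt_edge:
  assumes "PL \<subseteq> E"
  shows "(\<Sum>e\<in>E. wt_edge U L E PL e)
           = card {B \<in> butterflies U L E. bf_edges E B \<inter> PL \<noteq> {}}"
proof -
  let ?BF = "butterflies U L E"
  have fin_PL: "finite PL" using assms finite_subset finite_E by blast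
  have "(\<Sum>e\<in>E. wt_edge U L E PL e) = (\<Sum>e\<in>PL. \<Sum>B \<in> {B \<in> ?BF. e \<in> bf_edges E B}. wt_bf E PL B)"
    using assms by (subst sum.mono_neutral_right[OF finite_E assms]) (auto simp: wt_edge_def)
  also have "\<dots> = (\<Sum>B\<in>?BF. \<Sum>e \<in> {e \<in> PL. e \<in> bf_edges E B}. wt_bf E PL B)"
    by (rule sum.swap_restrict[OF fin_PL finite_butterflies])
  also have "\<dots> = (\<Sum>B\<in>?BF. real (card (bf_edges E B \<inter> PL)) * wt_bf E PL B)"
  proof (intro sum.cong refl)
    fix B
    have "{e \<in> PL. e \<in> bf_edges E B} = bf_edges E B \<inter> PL" by blast
    then show "(\<Sum>e \<in> {e \<in> PL. e \<in> bf_edges E B}. wt_bf E PL B)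
                 = real (card (bf_edges E B \<inter> PL)) * wt_bf E PL B"
      by (simp only: sum_constant)
  qed
  also have "\<dots> = (\<Sum>B\<in>?BF. if bf_edges E B \<inter> PL \<noteq> {} then 1 else 0)"
    by (intro sum.cong refl) (auto simp: wt_bf_def Let_def card_eq_0_iff fin_PL)
  also have "\<dots> = card {B \<in> ?BF. bf_edges E B \<inter> PL \<noteq> {}}"
    using finite_butterflies by (simp add: sum.If_cases Int_def)
  finally show ?thesis .
qed

lemma card_butterflies_avoiding_le_choose_2:
  "card {B \<in> butterflies U L E. bf_edges E B \<inter> PL = {}} \<le> card (E - PL) choose 2"
proof -
  \<comment> \<open>A butterfly is the vertex set of each of its two pairs of opposite edges.\<close>
  let ?vertices = "\<lambda>S :: ('a \<times> 'a) set. fst ` S \<union> snd ` S"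
  have "{B \<in> butterflies U L E. bf_edges E B \<inter> PL = {}}
          \<subseteq> ?vertices ` {S. S \<subseteq> E - PL \<and> card S = 2}"
  proof
    fix B assume B: "B \<in> {B \<in> butterflies U L E. bf_edges E B \<inter> PL = {}}"
    then obtain u1 u2 v1 v2 where "B = {u1, u2, v1, v2}" "u1 \<noteq> u2" "v1 \<noteq> v2"
      "bf_edges E B = {(u1, v1), (u1, v2), (u2, v1), (u2, v2)}"
      by (auto elim: butterfliesE)
    moreover have "bf_edges E B \<subseteq> E - PL"
      using B by (auto simp: bf_edges_def)
    ultimately have "{(u1, v1), (u2, v2)} \<in> {S. S \<subseteq> E - PL \<and> card S = 2}"
      by simp
    moreover have "B = ?vertices {(u1, v1), (u2, v2)}"
      using \<open>B = {u1, u2, v1, v2}\<close> by auto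
    ultimately show "B \<in> ?vertices ` {S. S \<subseteq> E - PL \<and> card S = 2}" by blast
  qed
  then have "card {B \<in> butterflies U L E. bf_edges E B \<inter> PL = {}}
               \<le> card (?vertices ` {S. S \<subseteq> E - PL \<and> card S = 2})"
    using finite_E by (intro card_mono finite_imageI) auto
  also have "\<dots> \<le> card {S. S \<subseteq> E - PL \<and> card S = 2}"
    using finite_E by (intro card_image_le) auto
  also have "\<dots> = card (E - PL) choose 2"
    using finite_E by (simp add: n_subsets)
  finally show ?thesis .
qed

lemma card_not_light_le:
  assumes "0 < eps" "0 < bb" "0 < ww"
  shows "real (card {e \<in> E. \<not> light U L E bb ww eps e})
           \<le> (8 * real (num_butterflies U L E) / bb + 2 * real (num_wedges E) / ww)
               * (eps * bb) powr (1/4)"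
proof -
  define q where "q = (eps * bb) powr (1/4)"
  have "0 < q" using assms by (simp add: q_def)
  define A where "A = {e \<in> E. bb / (2 * q) \<le> real (edge_butterflies U L E e)}"
  define D where "D = {e \<in> E. ww / q \<le> edge_degree E e}"
  have "{e \<in> E. \<not> light U L E bb ww eps e} \<subseteq> A \<union> D"
    using powr_three_quarters_div[OF assms(1,2)]
    by (auto simp: light_def A_def D_def q_def not_less field_simps)
  then have "card {e \<in> E. \<not> light U L E bb ww eps e} \<le> card (A \<union> D)"
    by (intro card_mono) (auto simp: A_def D_def finite_E)
  also have "\<dots> \<le> card A + card D"
    by (rule card_Un_le)
  finally have "card {e \<in> E. \<not> light U L E bb ww eps e} \<le> card A + card D" .
  moreover have "real (card A) \<le> 4 * real (num_butterflies U L E) / (bb / (2 * q))"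
    using card_Markov_inequality[OF finite_E, of "\<lambda>e. real (edge_butterflies U L E e)" "bb / (2 * q)"]
      \<open>0 < q\<close> assms sum_edge_butterflies unfolding A_def by (simp flip: of_nat_sum)
  moreover have "real (card D) \<le> 2 * real (num_wedges E) / (ww / q)"
    using card_Markov_inequality[OF finite_E, of "edge_degree E" "ww / q"]
      \<open>0 < q\<close> assms sum_edge_degree unfolding D_def by (simp add: edge_degree_eq_card_wedges)
  ultimately have "real (card {e \<in> E. \<not> light U L E bb ww eps e})
      \<le> 4 * real (num_butterflies U L E) / (bb / (2 * q)) + 2 * real (num_wedges E) / (ww / q)"
    by linarith
  also have "\<dots> = (8 * real (num_butterflies U L E) / bb + 2 * real (num_wedges E) / ww) * q"
    using \<open>0 < q\<close> assms by (simp add: field_simps)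
  finally show ?thesis unfolding q_def .
qed

lemma wedges_nonempty:
  assumes "B \<in> butterflies U L E"
  shows "wedges E \<noteq> {}"
proof -
  obtain u1 v1 v2 where "v1 \<noteq> v2" "(u1, v1) \<in> E" "(u1, v2) \<in> E"
    using assms by (elim butterfliesE) blast
  then have "{(u1, v1), (u1, v2)} \<in> wedges E"
    unfolding wedges_def by force
  then show ?thesis by blast
qed

lemma appropriate_card_heavy_part_le:
  assumes part: "appropriate U L E bb ww eps PH PL" and "0 < eps" "0 < bb" "0 < ww"
    and ww: "real (num_wedges E) / 6 \<le> ww"
  shows "real (card PH) \<le> (8 * real (num_butterflies U L E) / bb + 12) * (eps * bb) powr (1/4)"
proof -
  have "PH \<subseteq> {e \<in> E. \<not> light U L E bb ww eps e}"
    using part by (auto simp: appropriate_def)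
  then have "real (card PH) \<le> real (card {e \<in> E. \<not> light U L E bb ww eps e})"
    by (intro of_nat_mono card_mono) (auto simp: finite_E)
  also have "\<dots> \<le> (8 * real (num_butterflies U L E) / bb + 2 * real (num_wedges E) / ww)
                    * (eps * bb) powr (1/4)"
    by (rule card_not_light_le[OF \<open>0 < eps\<close> \<open>0 < bb\<close> \<open>0 < ww\<close>])
  also have "\<dots> \<le> (8 * real (num_butterflies U L E) / bb + 12) * (eps * bb) powr (1/4)"
    using ww \<open>0 < ww\<close> by (intro mult_right_mono) (auto simp: field_simps)
  finally show ?thesis .
qed

lemma card_butterflies_avoiding_le_c_H:
  assumes part: "appropriate U L E bb ww eps PH PL" and "0 < eps"
    and bb: "real (num_butterflies U L E) / 2 \<le> bb" "bb \<le> 2 * real (num_butterflies U L E)"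
    and ww: "real (num_wedges E) / 6 \<le> ww"
  shows "real (card {B \<in> butterflies U L E. bf_edges E B \<inter> PL = {}})
           \<le> c_H * eps * real (num_butterflies U L E)"
proof (cases "{B \<in> butterflies U L E. bf_edges E B \<inter> PL = {}} = {}")
  case True
  show ?thesis unfolding True using \<open>0 < eps\<close> by (simp add: c_H_def)
next
  case False
  then obtain B0 where B0: "B0 \<in> butterflies U L E" "bf_edges E B0 \<inter> PL = {}"
    by blast
  define b where "b = real (num_butterflies U L E)"
  define h where "h = real (card (E - PL))"
  define q where "q = (eps * bb) powr (1/4)"
  define r where "r = b / bb"
  have "0 < b"
    using B0 finite_butterflies by (auto simp: b_def num_butterflies_def card_gt_0_iff)
  then have "0 < bb" using bb by (simp add: b_def)
  have r: "1/2 \<le> r" "r \<le> 2"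
    using bb \<open>0 < bb\<close> by (auto simp: r_def b_def field_simps)
  have "0 < card (wedges E)"
    using wedges_nonempty[OF B0(1)] finite_wedges[OF finite_E] by (simp add: card_gt_0_iff)
  then have "0 < ww" using ww by (simp add: num_wedges_def)
  have "E - PL = PH" using part by (auto simp: appropriate_def)
  then have h_le: "h \<le> (8 * r + 12) * q"
    using appropriate_card_heavy_part_le[OF part \<open>0 < eps\<close> \<open>0 < bb\<close> \<open>0 < ww\<close> ww]
    by (simp add: h_def r_def b_def q_def)
  have "bf_edges E B0 \<subseteq> E - PL"
    using B0(2) by (auto simp: bf_edges_def)
  then have "4 \<le> h"
    using card_mono[OF _ \<open>bf_edges E B0 \<subseteq> E - PL\<close>] card_bf_edges[OF B0(1)]
    by (simp add: h_def finite_E)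
  have "real (card {B \<in> butterflies U L E. bf_edges E B \<inter> PL = {}}) \<le> real (card (E - PL) choose 2)"
    using card_butterflies_avoiding_le_choose_2 by (rule of_nat_mono)
  also have "\<dots> \<le> h\<^sup>2 / 2"
    unfolding h_def by (rule real_choose_two_le)
  also have "\<dots> \<le> c_H * r * q ^ 4"
    by (rule half_square_le_c_H_mult[OF \<open>4 \<le> h\<close> h_le r])
  also have "\<dots> = c_H * eps * b"
    using \<open>0 < eps\<close> \<open>0 < bb\<close> by (simp add: q_def r_def powr_quarter_pow_4)
  finally show ?thesis unfolding b_def .
qed

lemma card_butterflies_meeting_bounds:
  assumes "appropriate U L E bb ww eps PH PL" "0 < eps"
    and "real (num_butterflies U L E) / 2 \<le> bb" "bb \<le> 2 * real (num_butterflies U L E)"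
    and "real (num_wedges E) / 6 \<le> ww"
  shows "real (num_butterflies U L E) * (1 - c_H * eps)
           \<le> real (card {B \<in> butterflies U L E. bf_edges E B \<inter> PL \<noteq> {}})"
    and "card {B \<in> butterflies U L E. bf_edges E B \<inter> PL \<noteq> {}} \<le> num_butterflies U L E"
proof -
  let ?meeting = "{B \<in> butterflies U L E. bf_edges E B \<inter> PL \<noteq> {}}"
  let ?avoiding = "{B \<in> butterflies U L E. bf_edges E B \<inter> PL = {}}"
  have "butterflies U L E = ?meeting \<union> ?avoiding"
    by blast
  then have "num_butterflies U L E = card ?meeting + card ?avoiding"
    unfolding num_butterflies_def using finite_butterflies
    by (simp add: card_Un_disjoint[symmetric] disjoint_iff)
  then show "real (num_butterflies U L E) * (1 - c_H * eps) \<le> real (card ?meeting)"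
    and "card ?meeting \<le> num_butterflies U L E"
    using card_butterflies_avoiding_le_c_H[OF assms] by (simp_all add: algebra_simps)
qed

section \<open>Sampling edges\<close>

lemma expectation_sample_mean_wt_edge:
  assumes "E \<noteq> {}" "PL \<subseteq> E" "0 < s"
  shows "real (card E) * measure_pmf.expectation (edge_samples E s)
            (\<lambda>f. (1 / real s) * (\<Sum>i<s. wt_edge U L E PL (f i)))
         = real (card {B \<in> butterflies U L E. bf_edges E B \<inter> PL \<noteq> {}})"
proof -
  have "integrable (measure_pmf (pmf_of_set E)) (wt_edge U L E PL)"
    using assms finite_E by (intro integrable_measure_pmf_finite) simp
  then have "measure_pmf.expectation (edge_samples E s) (\<lambda>f. \<Sum>i<s. wt_edge U L E PL (f i))
               = real s * ((\<Sum>e\<in>E. wt_edge U L E PL e) / real (card E))"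
    using assms finite_E
    by (simp add: edge_samples_def expectation_sum_Pi_pmf integral_pmf_of_set)
  then show ?thesis
    using assms finite_E sum_wt_edge[OF assms(2)] by (simp add: card_gt_0_iff)
qed

lemma prob_sample_mean_wt_edge_less:
  fixes PL :: "('a \<times> 'a) set" and M a :: real
  defines "G \<equiv> real (card {B \<in> butterflies U L E. bf_edges E B \<inter> PL \<noteq> {}})"
  assumes "E \<noteq> {}" "PL \<subseteq> E"
    and M: "0 < M" "\<And>e. e \<in> PL \<Longrightarrow> real (edge_butterflies U L E e) \<le> M"
    and "0 < G" "a < G"
  shows "measure_pmf.prob (edge_samples E s)
           {f. real (card E) * ((1 / real s) * (\<Sum>i<s. wt_edge U L E PL (f i))) < a}
         \<le> exp (- real s * (G - a)\<^sup>2 / (2 * M * real (card E) * G))"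
proof -
  define m where "m = real (card E)"
  have "0 < m" using assms finite_E by (simp add: m_def card_gt_0_iff)
  have X: "0 \<le> wt_edge U L E PL e \<and> wt_edge U L E PL e \<le> M" if "e \<in> set_pmf (pmf_of_set E)" for e
  proof (cases "e \<in> PL")
    case True
    then show ?thesis
      using wt_edge_nonneg[of U L E PL e] wt_edge_le_edge_butterflies[of U L E PL e] M(2)[of e]
      by linarith
  qed (use \<open>0 < M\<close> in \<open>simp add: wt_edge_def\<close>)
  have "measure_pmf.expectation (pmf_of_set E) (wt_edge U L E PL) = G / m"
    using assms finite_E sum_wt_edge[OF assms(3)] by (simp add: integral_pmf_of_set G_def m_def)
  note chernoff = prob_Pi_pmf_sum_le_chernoff[where I = "{..<s}" and d = undefined and p = "pmf_of_set E",
      OF _ X \<open>0 < M\<close> this[symmetric], of "(G - a) / m"]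
  have "{f. m * ((1 / real s) * (\<Sum>i<s. wt_edge U L E PL (f i))) < a}
          \<subseteq> {f. (\<Sum>i<s. wt_edge U L E PL (f i)) \<le> real s * (G / m - (G - a) / m)}"
    using \<open>0 < m\<close> by (cases "s = 0") (auto simp: field_simps)
  then have "measure_pmf.prob (edge_samples E s)
           {f. m * ((1 / real s) * (\<Sum>i<s. wt_edge U L E PL (f i))) < a}
         \<le> exp (- real s * ((G - a) / m)\<^sup>2 / (2 * M * (G / m)))"
    using chernoff \<open>0 < G\<close> \<open>a < G\<close> \<open>0 < m\<close> unfolding edge_samples_def
    by (auto intro: order_trans[OF measure_pmf.finite_measure_mono])
  also have "- real s * ((G - a) / m)\<^sup>2 / (2 * M * (G / m)) = - real s * (G - a)\<^sup>2 / (2 * M * m * G)"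
    using \<open>0 < m\<close> \<open>0 < G\<close> \<open>0 < M\<close> by (simp add: field_simps power2_eq_square)
  finally show ?thesis unfolding m_def .
qed

lemma prob_sample_mean_wt_edge_low_le_exp:
  fixes PH PL :: "('a \<times> 'a) set" and eps bb ww :: real and s :: nat
  defines "b \<equiv> real (num_butterflies U L E)"
  assumes "E \<noteq> {}" and part: "appropriate U L E bb ww eps PH PL" and "0 < eps"
    and bb: "b / 2 \<le> bb" "bb \<le> 2 * b" and ww: "real (num_wedges E) / 6 \<le> ww"
    and "0 < b" "c_H * eps < 1/2"
  shows "measure_pmf.prob (edge_samples E s)
           {f. real (card E) * ((1 / real s) * (\<Sum>i<s. wt_edge U L E PL (f i)))
                 < b * (1 - 2 * c_H * eps)}
         \<le> exp (- real s * (c_H\<^sup>2 * eps\<^sup>2 * b * (eps * bb) powr (1/4) / (4 * real (card E) * bb)))"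
proof -
  define m where "m = real (card E)"
  define a where "a = b * (1 - 2 * c_H * eps)"
  define G where "G = real (card {B \<in> butterflies U L E. bf_edges E B \<inter> PL \<noteq> {}})"
  define q where "q = (eps * bb) powr (1/4)"
  define M where "M = 2 * bb / q"
  have "0 < m" using \<open>E \<noteq> {}\<close> finite_E by (simp add: m_def card_gt_0_iff)
  have "0 < bb" using bb \<open>0 < b\<close> by simp
  then have "0 < q" "0 < M" using \<open>0 < eps\<close> by (simp_all add: q_def M_def)
  have G: "b * (1 - c_H * eps) \<le> G" "G \<le> b"
    using card_butterflies_meeting_bounds[OF part \<open>0 < eps\<close> bb[unfolded b_def] ww]
    by (simp_all add: G_def b_def)
  have "0 < b * (1 - c_H * eps)"
    using \<open>0 < b\<close> \<open>c_H * eps < 1/2\<close> by simp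
  with G(1) have "0 < G" by linarith
  have "c_H * eps * b \<le> G - a"
    using G(1) by (simp add: a_def algebra_simps)
  moreover have "0 < c_H * eps * b"
    using \<open>0 < b\<close> \<open>0 < eps\<close> by (simp add: c_H_def)
  ultimately have "a < G" by linarith
  have "PL \<subseteq> E" using part by (auto simp: appropriate_def)
  have "measure_pmf.prob (edge_samples E s)
          {f. m * ((1 / real s) * (\<Sum>i<s. wt_edge U L E PL (f i))) < a}
          \<le> exp (- real s * (G - a)\<^sup>2 / (2 * M * m * G))"
    using prob_sample_mean_wt_edge_less[OF \<open>E \<noteq> {}\<close> \<open>PL \<subseteq> E\<close> \<open>0 < M\<close>]
      appropriate_edge_butterflies_le[OF part _ \<open>0 < eps\<close> \<open>0 < bb\<close>] \<open>0 < G\<close> \<open>a < G\<close>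
    unfolding G_def m_def M_def q_def by blast
  also have "\<dots> \<le> exp (- real s * (c_H\<^sup>2 * eps\<^sup>2 * b * q / (4 * m * bb)))"
  proof -
    have "real s * (c_H\<^sup>2 * eps\<^sup>2 * b * q / (4 * m * bb))
            = real s * (c_H * eps * b)\<^sup>2 / (2 * M * m * b)"
      using \<open>0 < b\<close> \<open>0 < m\<close> \<open>0 < q\<close> \<open>0 < bb\<close> by (simp add: M_def field_simps power2_eq_square)
    also have "\<dots> \<le> real s * (G - a)\<^sup>2 / (2 * M * m * G)"
      using \<open>c_H * eps * b \<le> G - a\<close> \<open>0 < c_H * eps * b\<close> \<open>0 < G\<close> \<open>G \<le> b\<close> \<open>0 < M\<close> \<open>0 < m\<close>
      by (intro frac_le mult_left_mono power_mono) auto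
    finally show ?thesis by simp
  qed
  finally show ?thesis
    by (simp add: m_def a_def q_def)
qed

lemma card_vertices_div_square_gt_1:
  assumes "E \<noteq> {}" "0 < eps" "eps < 1"
  shows "1 < real (card (U \<union> L)) / eps\<^sup>2"
proof -
  have "eps\<^sup>2 < 1" using assms by (simp add: power_less_one_iff)
  moreover have "1 \<le> card (U \<union> L)"
    using assms(1) edges finite_U finite_L by (auto simp: Suc_le_eq card_gt_0_iff)
  ultimately show ?thesis
    using assms by (simp add: field_simps)
qed

lemma sample_size_pos:
  assumes "E \<noteq> {}" "0 < eps" "eps < 1" "0 < bb" "0 < c"
    and "c * real (card E) * ln (real (card (U \<union> L)) / eps\<^sup>2) / (bb powr (1/4) * eps powr (9/4))
           \<le> real s"
  shows "0 < s"
proof -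
  have "0 < ln (real (card (U \<union> L)) / eps\<^sup>2)"
    using card_vertices_div_square_gt_1[OF assms(1-3)] by simp
  then have "0 < c * real (card E) * ln (real (card (U \<union> L)) / eps\<^sup>2) / (bb powr (1/4) * eps powr (9/4))"
    using assms finite_E by (simp add: card_gt_0_iff)
  with assms(6) show ?thesis by linarith
qed

lemma prob_sample_mean_wt_edge_low:
  fixes PH PL :: "('a \<times> 'a) set" and eps bb ww c :: real and s :: nat
  defines "b \<equiv> real (num_butterflies U L E)"
  assumes "E \<noteq> {}" and part: "appropriate U L E bb ww eps PH PL"
    and eps: "0 < eps" "eps < 1"
    and bb: "b / 2 \<le> bb" "bb \<le> 2 * b" and ww: "real (num_wedges E) / 6 \<le> ww"
    and c: "1 / (2 * (1 - c_H * eps)) < c"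
    and s: "c * real (card E) * ln (real (card (U \<union> L)) / eps\<^sup>2) / (bb powr (1/4) * eps powr (9/4))
              \<le> real s"
  shows "measure_pmf.prob (edge_samples E s)
           {f. real (card E) * ((1 / real s) * (\<Sum>i<s. wt_edge U L E PL (f i)))
                 < b * (1 - 2 * c_H * eps)}
         < eps\<^sup>2 / real (card (U \<union> L))"
proof -
  define m where "m = real (card E)"
  define n where "n = real (card (U \<union> L))"
  define lN where "lN = ln (n / eps\<^sup>2)"
  have "0 < m" using \<open>E \<noteq> {}\<close> finite_E by (simp add: m_def card_gt_0_iff)
  have "1 < n / eps\<^sup>2"
    using card_vertices_div_square_gt_1[OF \<open>E \<noteq> {}\<close> eps] by (simp add: n_def)
  then have "0 < lN" by (simp add: lN_def)
  have "0 < n"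
    using \<open>1 < n / eps\<^sup>2\<close> by (cases "n = 0") (simp_all add: n_def)
  show ?thesis
  proof (cases "0 < b * (1 - 2 * c_H * eps)")
    case False
    then have "measure_pmf.prob (edge_samples E s)
                 {f. real (card E) * ((1 / real s) * (\<Sum>i<s. wt_edge U L E PL (f i)))
                       < b * (1 - 2 * c_H * eps)} = 0"
      by (intro prob_sample_mean_wt_edge_less_nonpos) simp
    then show ?thesis
      using eps \<open>0 < n\<close> by (simp add: n_def)
  next
    case True
    have "0 \<le> b" by (simp add: b_def)
    with True have "0 < b" "c_H * eps < 1/2"
      by (auto simp: zero_less_mult_iff)
    have "0 < bb" using bb \<open>0 < b\<close> by simp
    define q where "q = (eps * bb) powr (1/4)"
    have "0 < q" using eps \<open>0 < bb\<close> by (simp add: q_def)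
    have s': "c * m * lN / (q * eps\<^sup>2) \<le> real s"
      using s powr_quarter_mult_powr_nine_quarters[OF eps(1) \<open>0 < bb\<close>]
      by (simp add: m_def n_def lN_def q_def)
    have "1 / 2 \<le> 1 / (2 * (1 - c_H * eps))"
      by (rule frac_le) (use \<open>c_H * eps < 1/2\<close> eps in \<open>auto simp: c_H_def\<close>)
    with c have "1 / 2 < c" by linarith
    have "lN < c * c_H\<^sup>2 / 4 * lN * (1 / 2)"
      using \<open>1 / 2 < c\<close> \<open>0 < lN\<close> by (simp add: c_H_def)
    also have "\<dots> \<le> c * c_H\<^sup>2 / 4 * lN * (b / bb)"
      using bb \<open>0 < bb\<close> \<open>0 < lN\<close> \<open>1 / 2 < c\<close>
      by (intro mult_left_mono) (auto simp: field_simps)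
    also have "\<dots> = c * m * lN / (q * eps\<^sup>2) * (c_H\<^sup>2 * eps\<^sup>2 * b * q / (4 * m * bb))"
      using \<open>0 < m\<close> \<open>0 < q\<close> eps by (simp add: field_simps power2_eq_square)
    also have "\<dots> \<le> real s * (c_H\<^sup>2 * eps\<^sup>2 * b * q / (4 * m * bb))"
      using s' \<open>0 < b\<close> \<open>0 < m\<close> \<open>0 < q\<close> \<open>0 < bb\<close> by (intro mult_right_mono) auto
    finally have "exp (- real s * (c_H\<^sup>2 * eps\<^sup>2 * b * q / (4 * m * bb))) < exp (- lN)"
      by simp
    also have "exp (- lN) = eps\<^sup>2 / n"
      using \<open>1 < n / eps\<^sup>2\<close> by (simp add: lN_def exp_minus)
    finally show ?thesis
      using prob_sample_mean_wt_edge_low_le_exp[OF \<open>E \<noteq> {}\<close> part eps(1) bb[unfolded b_def] ww]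
        \<open>0 < b\<close> \<open>c_H * eps < 1/2\<close>
      by (auto simp: b_def m_def n_def q_def intro: le_less_trans)
  qed
qed

end

theorem lemma11:
  fixes U L :: "'a set" and E PH PL :: "('a \<times> 'a) set"
    and eps bb ww c :: real and s :: nat
  defines "n \<equiv> card (U \<union> L)" and "m \<equiv> card E"
    and "b \<equiv> real (num_butterflies U L E)" and "w \<equiv> real (num_wedges E)"
    and "Y \<equiv> (\<lambda>f :: nat \<Rightarrow> 'a \<times> 'a. (1 / real s) * (\<Sum>i<s. wt_edge U L E PL (f i)))"
  assumes finU: "finite U" and finL: "finite L" and disj: "U \<inter> L = {}"
    and EUL: "E \<subseteq> U \<times> L" and Ene: "E \<noteq> {}"
    and eps: "0 < eps" "eps < 1"
    and bb: "b / 2 \<le> bb" "bb \<le> 2 * b"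
    and ww: "w / 6 \<le> ww" "ww \<le> 6 * w"
    and part: "appropriate U L E bb ww eps PH PL"
    and c: "c > 0"
    and s: "real s \<ge> c * real m * ln (real n / eps\<^sup>2) / (bb powr (1/4) * eps powr (9/4))"
  shows "b * (1 - c_H * eps) \<le> real m * measure_pmf.expectation (edge_samples E s) Y
         \<and> real m * measure_pmf.expectation (edge_samples E s) Y \<le> b
         \<and> (c > 1 / (2 * (1 - c_H * eps)) \<longrightarrow>
             measure_pmf.prob (edge_samples E s) {f. real m * Y f < b * (1 - 2 * c_H * eps)}
               < eps\<^sup>2 / real n)"
proof -
  interpret bipartite_graph U L E
    using finU finL disj EUL by unfold_locales
  define G where "G = real (card {B \<in> butterflies U L E. bf_edges E B \<inter> PL \<noteq> {}})"
  have "PL \<subseteq> E" using part by (auto simp: appropriate_def)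
  have "b * (1 - c_H * eps) \<le> G" "G \<le> b"
    using card_butterflies_meeting_bounds[OF part eps(1)] bb ww
    by (simp_all add: G_def b_def w_def)
  moreover have "real m * measure_pmf.expectation (edge_samples E s) Y = G"
  proof (cases "b = 0")
    case True
    \<comment> \<open>Then bb = 0, the bound on s is vacuous and s = 0 is possible, but all weights vanish.\<close>
    then have "butterflies U L E = {}"
      using finite_butterflies by (simp add: b_def num_butterflies_def)
    then have "wt_edge U L E PL e = 0" for e
      by (simp add: wt_edge_def)
    then have "Y = (\<lambda>_. 0)" by (simp add: Y_def)
    then show ?thesis using \<open>butterflies U L E = {}\<close> by (simp add: G_def)
  next
    case False
    then have "0 < bb" using bb by (simp add: b_def)
    then have "0 < s"
      using sample_size_pos[OF Ene eps _ c] s by (simp add: m_def n_def)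
    then show ?thesis
      using expectation_sample_mean_wt_edge[OF Ene \<open>PL \<subseteq> E\<close>] by (simp add: G_def Y_def m_def)
  qed
  moreover have "measure_pmf.prob (edge_samples E s) {f. real m * Y f < b * (1 - 2 * c_H * eps)}
                   < eps\<^sup>2 / real n" if "c > 1 / (2 * (1 - c_H * eps))"
    using prob_sample_mean_wt_edge_low[OF Ene part eps bb[unfolded b_def] ww(1)[unfolded w_def] that]
      s by (simp add: Y_def b_def m_def n_def)
  ultimately show ?thesis by simp
qed

end
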